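(* At any time during the execution of DASH (described in the context) on an initially connected graph with $n$ nodes, every surviving node $v$ satisfies $\mathrm{rem}(v)\le n$.
   Context: Model: a network is an undirected graph, initially a connected graph $G_0$ on $n$ nodes. In each round an adversary deletes one surviving node $v$ with its incident edges, and then DASH adds edges. $G$ is the current network; $E'$ is the set of healing edges added so far whose endpoints both survive; $G'=(V(G),E')$. $N(u,G)$, $N(u,G')$ are neighbor sets in $G$, $G'$; $\delta(u)=\deg_G(u)-\deg_{G_0}(u)$. DASH: initially every node receives an ID drawn independently and uniformly from $[0,1]$ (its initial ID). When $v$ is deleted (quantities evaluated just before the deletion): partition the nodes of $N(v,G)$ whose current ID differs from that of $v$ into classes of equal current ID; $UN(v,G)$ consists of one node per class, the one with lowest initial ID. Let $S=UN(v,G)\cup N(v,G')$. Order $S$ by increasing $\delta$ and place it in this order into a complete binary tree with $|S|$ positions, filled level by level from the top and left to right; add to the network and to $E'$ the edge between each node of $S$ and the node at its parent position. Then all nodes of the component of $G'$ containing $S$ set their ID to the minimum current ID in $S$. Weights: every node $u$ has weight $w(u)$, initially $1$; when a node $v$ is deleted, $w(v)$ is added to the weight of an arbitrarily chosen node of $N(v,G')$. For a subgraph $H$, $W(H)$ is the sum of the weights of its vertices. For distinct surviving nodes $x,y$, $T(x,y)$ is the connected component of $G'-y$ containing $x$. Define $\mathrm{rem}(v)=\sum_{u\in N(v,G')}W(T(u,v))-\max_{u\in N(v,G')}W(T(u,v))+w(v)$ (the maximum over the empty set being $0$). *)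

theory Defs
  imports Complex_Main
begin

definition nbrs :: "'a set set \<Rightarrow> 'a \<Rightarrow> 'a set" where
  "nbrs E u = {x. x \<noteq> u \<and> {u, x} \<in> E}"

definition deg :: "'a set set \<Rightarrow> 'a \<Rightarrow> nat" where
  "deg E u = card (nbrs E u)"

definition adj :: "'a set \<Rightarrow> 'a set set \<Rightarrow> ('a \<times> 'a) set" where
  "adj V E = {(a, b). a \<in> V \<and> b \<in> V \<and> a \<noteq> b \<and> {a, b} \<in> E}"

definition comp :: "'a set \<Rightarrow> 'a set set \<Rightarrow> 'a \<Rightarrow> 'a set" where
  "comp V E x = {y \<in> V. (x, y) \<in> (adj V E)\<^sup>*}"

definition graph :: "'a set \<Rightarrow> 'a set set \<Rightarrow> bool" where
  "graph V E \<longleftrightarrow> (\<forall>e \<in> E. e \<subseteq> V \<and> card e = 2)"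

definition connected_graph :: "'a set \<Rightarrow> 'a set set \<Rightarrow> bool" where
  "connected_graph V E \<longleftrightarrow> graph V E \<and> (\<forall>x \<in> V. \<forall>y \<in> V. (x, y) \<in> (adj V E)\<^sup>*)"

text \<open>Edges of the complete binary tree filled level by level with the list xs
  (0-indexed: position i > 0 has parent position (i - 1) div 2).\<close>
definition tree_edges :: "'a list \<Rightarrow> 'a set set" where
  "tree_edges xs = {{xs ! i, xs ! ((i - 1) div 2)} | i. 0 < i \<and> i < length xs}"

record 'a dstate =
  alive :: "'a set"
  edges :: "'a set set"
  hedges :: "'a set set"     \<comment> \<open>E': healing edges with both endpoints surviving\<close>
  ident :: "'a \<Rightarrow> real"
  wt :: "'a \<Rightarrow> nat"

definition dash_init :: "'a set \<Rightarrow> 'a set set \<Rightarrow> ('a \<Rightarrow> real) \<Rightarrow> 'a dstate" where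
  "dash_init V0 E0 id0 = \<lparr>alive = V0, edges = E0, hedges = {}, ident = id0, wt = (\<lambda>_. 1)\<rparr>"

text \<open>UN(v,G): one node per class of equal current ID among the neighbours of v whose
  current ID differs from that of v, namely one with lowest initial ID.\<close>
definition is_UN :: "('a \<Rightarrow> real) \<Rightarrow> 'a dstate \<Rightarrow> 'a \<Rightarrow> 'a set \<Rightarrow> bool" where
  "is_UN id0 s v U \<longleftrightarrow>
     (let C = {x \<in> nbrs (edges s) v. ident s x \<noteq> ident s v} in
       U \<subseteq> C \<and>
       (\<forall>c \<in> C. \<exists>!u. u \<in> U \<and> ident s u = ident s c) \<and>
       (\<forall>u \<in> U. \<forall>c \<in> C. ident s c = ident s u \<longrightarrow> id0 u \<le> id0 c))"

text \<open>All choices left open by the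
  description (the deleted node, ties in UN, ties in the ordering by delta, the receiver
  of the weight) are existentially quantified.\<close>
definition dash_step :: "'a set set \<Rightarrow> ('a \<Rightarrow> real) \<Rightarrow> 'a dstate \<Rightarrow> 'a dstate \<Rightarrow> bool" where
  "dash_step E0 id0 s s2 \<longleftrightarrow>
    (\<exists>v U xs.
       v \<in> alive s \<and>
       is_UN id0 s v U \<and>
       distinct xs \<and> set xs = U \<union> nbrs (hedges s) v \<and>
       sorted_wrt (\<lambda>a b. int (deg (edges s) a) - int (deg E0 a)
                         \<le> int (deg (edges s) b) - int (deg E0 b)) xs \<and>
       alive s2 = alive s - {v} \<and>
       edges s2 = {e \<in> edges s. v \<notin> e} \<union> tree_edges xs \<and>
       hedges s2 = {e \<in> hedges s. v \<notin> e} \<union> tree_edges xs \<and>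
       ident s2 = (\<lambda>x. if xs \<noteq> [] \<and> x \<in> comp (alive s2) (hedges s2) (hd xs)
                        then Min (ident s ` set xs) else ident s x) \<and>
       ((nbrs (hedges s) v = {} \<and> wt s2 = wt s) \<or>
        (\<exists>r \<in> nbrs (hedges s) v. wt s2 = (wt s)(r := wt s r + wt s v))))"

definition dash_reachable :: "'a set \<Rightarrow> 'a set set \<Rightarrow> ('a \<Rightarrow> real) \<Rightarrow> 'a dstate \<Rightarrow> bool" where
  "dash_reachable V0 E0 id0 s \<longleftrightarrow> (dash_step E0 id0)\<^sup>*\<^sup>* (dash_init V0 E0 id0) s"

text \<open>W(T(u,v)) where T(u,v) is the component of G' - v containing u.\<close>
definition WT :: "'a dstate \<Rightarrow> 'a \<Rightarrow> 'a \<Rightarrow> nat" where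
  "WT s u v = sum (wt s) (comp (alive s - {v}) (hedges s) u)"

definition rem :: "'a dstate \<Rightarrow> 'a \<Rightarrow> nat" where
  "rem s v = (\<Sum>u \<in> nbrs (hedges s) v. WT s u v)
             - Max (insert 0 ((\<lambda>u. WT s u v) ` nbrs (hedges s) v)) + wt s v"

end

theory Submission
  imports Defs
begin

text \<open>DASH keeps the healing graph \<open>G'\<close> a forest on whose components the current IDs are
  constant. When \<open>v\<close> is deleted, the nodes of \<open>UN(v,G)\<close> carry pairwise distinct IDs, all
  different from the ID of \<open>v\<close>, while the \<open>G'\<close>-neighbours of \<open>v\<close> carry the ID of \<open>v\<close> and lie in
  different components of \<open>G' - v\<close>. Hence the nodes of the healing tree lie in pairwise distinct
  components, the tree closes no cycle, and giving the merged component a single ID restores the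
  invariant. Weight is only moved, never created, so the surviving nodes carry total weight at
  most \<open>n\<close>. Finally the trees \<open>T(u,v)\<close> for \<open>u \<in> N(v,G')\<close> are disjoint components of \<open>G' - v\<close>, so
  \<open>rem(v)\<close> is bounded by the total weight.\<close>

lemma adj_sym: "(a, b) \<in> adj A H \<Longrightarrow> (b, a) \<in> adj A H"
  by (auto simp: adj_def insert_commute)

lemma rtrancl_adj_sym: "(a, b) \<in> (adj A H)\<^sup>* \<Longrightarrow> (b, a) \<in> (adj A H)\<^sup>*"
  by (induction rule: rtrancl_induct) (auto intro: adj_sym converse_rtrancl_into_rtrancl)

lemma rtrancl_adj_mono: "A \<subseteq> A' \<Longrightarrow> H \<subseteq> H' \<Longrightarrow> (adj A H)\<^sup>* \<subseteq> (adj A' H')\<^sup>*"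
  by (rule rtrancl_mono) (auto simp: adj_def)

lemma rtrancl_adj_endpoints: "(x, y) \<in> (adj A H)\<^sup>* \<Longrightarrow> x \<noteq> y \<Longrightarrow> x \<in> A \<and> y \<in> A"
  by (auto elim: converse_rtranclE rtranclE simp: adj_def)

lemma adj_insert_edge:
  "x \<in> A \<Longrightarrow> y \<in> A \<Longrightarrow> x \<noteq> y \<Longrightarrow> adj A (insert {x, y} F) = adj A F \<union> {(x, y), (y, x)}"
  by (auto simp: adj_def doubleton_eq_iff)

lemma mem_comp_iff_of_rtrancl_adj:
  assumes "(x, y) \<in> (adj A H)\<^sup>*"
  shows "x \<in> comp A H z \<longleftrightarrow> y \<in> comp A H z"
  using assms rtrancl_adj_endpoints[OF assms] rtrancl_adj_sym[OF assms]
  by (cases "x = y") (auto simp: comp_def intro: rtrancl_trans)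

lemma rtrancl_Un_sym_pair:
  "(p, q) \<in> (R \<union> {(x, y), (y, x)})\<^sup>* \<Longrightarrow>
    (p, q) \<in> R\<^sup>* \<or> (p, x) \<in> R\<^sup>* \<and> (y, q) \<in> R\<^sup>* \<or> (p, y) \<in> R\<^sup>* \<and> (x, q) \<in> R\<^sup>*"
  by (induction rule: rtrancl_induct) (auto intro: rtrancl_into_rtrancl)

lemma rtrancl_adj_Un_through:
  assumes "\<forall>e\<in>T. e \<subseteq> S" and "(a, b) \<in> (adj A (F \<union> T))\<^sup>*"
  shows "(a, b) \<in> (adj A F)\<^sup>* \<or>
    (\<exists>x\<in>S. (a, x) \<in> (adj A F)\<^sup>*) \<and> (\<exists>y\<in>S. (y, b) \<in> (adj A F)\<^sup>*)"
  using assms(2)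
proof (induction rule: rtrancl_induct)
  case (step m q)
  show ?case
  proof (cases "(m, q) \<in> adj A F")
    case True
    with step.IH show ?thesis by (auto intro: rtrancl_into_rtrancl)
  next
    case False
    with step.hyps(2) assms(1) have "m \<in> S" "q \<in> S" by (auto simp: adj_def)
    with step.IH show ?thesis by blast
  qed
qed simp

lemma nbrs_subset: "\<forall>e\<in>E. e \<subseteq> A \<Longrightarrow> nbrs E v \<subseteq> A - {v}"
  by (auto simp: nbrs_def)

definition forest :: "'a set \<Rightarrow> 'a set set \<Rightarrow> bool" where
  "forest A H \<longleftrightarrow> (\<forall>a b. {a, b} \<in> H \<longrightarrow> a \<noteq> b \<longrightarrow> (a, b) \<notin> (adj A (H - {{a, b}}))\<^sup>*)"

lemma forest_empty: "forest A {}"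
  by (simp add: forest_def)

lemma forest_mono: "forest A H \<Longrightarrow> A' \<subseteq> A \<Longrightarrow> H' \<subseteq> H \<Longrightarrow> forest A' H'"
  unfolding forest_def by (meson Diff_mono order_refl rtrancl_adj_mono subsetD)

lemma forest_insert_edge:
  assumes forest: "forest A F" and F_sub: "\<forall>e\<in>F. e \<subseteq> A"
    and "x \<in> A" "y \<in> A" "x \<noteq> y" and unconnected: "(x, y) \<notin> (adj A F)\<^sup>*"
  shows "forest A (insert {x, y} F)"
  unfolding forest_def
proof (intro allI impI notI)
  fix a b
  assume ab: "{a, b} \<in> insert {x, y} F" "a \<noteq> b"
    and path: "(a, b) \<in> (adj A (insert {x, y} F - {{a, b}}))\<^sup>*"
  show False
  proof (cases "{a, b} = {x, y}")
    case True
    have "(a, b) \<in> (adj A F)\<^sup>*"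
      using path rtrancl_adj_mono[of A A "insert {x, y} F - {{a, b}}" F] True by blast
    with True unconnected show False
      by (auto simp: doubleton_eq_iff dest: rtrancl_adj_sym)
  next
    case False
    let ?R = "adj A (F - {{a, b}})"
    have abF: "{a, b} \<in> F" using ab False by auto
    have ab_edge: "(a, b) \<in> adj A F" "(b, a) \<in> adj A F"
      using abF F_sub ab(2) by (auto simp: adj_def insert_commute)
    have R_sub: "?R\<^sup>* \<subseteq> (adj A F)\<^sup>*" by (rule rtrancl_adj_mono) auto
    have "insert {x, y} F - {{a, b}} = insert {x, y} (F - {{a, b}})" using False by auto
    with path adj_insert_edge[OF \<open>x \<in> A\<close> \<open>y \<in> A\<close> \<open>x \<noteq> y\<close>]
    have "(a, b) \<in> (?R \<union> {(x, y), (y, x)})\<^sup>*" by simp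
    then consider "(a, b) \<in> ?R\<^sup>*" | "(a, x) \<in> ?R\<^sup>*" "(y, b) \<in> ?R\<^sup>*" | "(a, y) \<in> ?R\<^sup>*" "(x, b) \<in> ?R\<^sup>*"
      by (blast dest: rtrancl_Un_sym_pair)
    then show False
    proof cases
      case 1
      with forest abF ab(2) show False unfolding forest_def by blast
    next
      case 2
      then have "(x, a) \<in> (adj A F)\<^sup>*" "(b, y) \<in> (adj A F)\<^sup>*"
        using R_sub by (auto dest: rtrancl_adj_sym)
      with ab_edge unconnected show False by (meson rtrancl_into_rtrancl rtrancl_trans)
    next
      case 3
      then have "(x, b) \<in> (adj A F)\<^sup>*" "(a, y) \<in> (adj A F)\<^sup>*" using R_sub by auto
      with ab_edge unconnected show False by (meson rtrancl_into_rtrancl rtrancl_trans)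
    qed
  qed
qed

lemma forest_nbrs_unconnected:
  assumes forest: "forest A H" and "\<forall>e\<in>H. e \<subseteq> A"
    and w: "w1 \<in> nbrs H v" "w2 \<in> nbrs H v" "w1 \<noteq> w2"
  shows "(w1, w2) \<notin> (adj (A - {v}) H)\<^sup>*"
proof
  assume path: "(w1, w2) \<in> (adj (A - {v}) H)\<^sup>*"
  have e1: "{v, w1} \<in> H" "v \<noteq> w1" and e2: "{v, w2} \<in> H" "v \<noteq> w2"
    using w by (auto simp: nbrs_def)
  let ?R = "adj A (H - {{v, w1}})"
  have "(w1, w2) \<in> ?R\<^sup>*"
    using path rtrancl_mono[of "adj (A - {v}) H" ?R] by (auto simp: adj_def)
  moreover have "(w2, v) \<in> ?R"
    using e2 assms(2) w(3) by (auto simp: adj_def doubleton_eq_iff insert_commute)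
  ultimately have "(v, w1) \<in> ?R\<^sup>*" by (blast intro: rtrancl_into_rtrancl rtrancl_adj_sym)
  with forest e1 show False unfolding forest_def by blast
qed

lemma comp_nbrs_disjoint:
  assumes "forest A H" "\<forall>e\<in>H. e \<subseteq> A"
    and "w1 \<in> nbrs H v" "w2 \<in> nbrs H v" "w1 \<noteq> w2"
  shows "comp (A - {v}) H w1 \<inter> comp (A - {v}) H w2 = {}"
  using forest_nbrs_unconnected[OF assms]
  by (auto simp: comp_def dest: rtrancl_adj_sym intro: rtrancl_trans)

lemma tree_edges_image:
  "tree_edges xs = (\<lambda>i. {xs ! i, xs ! ((i - 1) div 2)}) ` {i. 0 < i \<and> i < length xs}"
  unfolding tree_edges_def by blast

lemma tree_edges_Nil: "tree_edges [] = {}"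
  by (simp add: tree_edges_def)

lemma tree_edges_snoc:
  assumes "xs \<noteq> []"
  shows "tree_edges (xs @ [x]) = insert {x, xs ! ((length xs - 1) div 2)} (tree_edges xs)"
proof -
  let ?ys = "xs @ [x]" and ?I = "{i. 0 < i \<and> i < length xs}"
  have parent: "(i - 1) div 2 < i" if "0 < i" for i :: nat using that by linarith
  have old: "(\<lambda>i. {?ys ! i, ?ys ! ((i - 1) div 2)}) ` ?I = (\<lambda>i. {xs ! i, xs ! ((i - 1) div 2)}) ` ?I"
  proof (rule image_cong)
    fix i assume "i \<in> ?I"
    with parent[of i] show "{?ys ! i, ?ys ! ((i - 1) div 2)} = {xs ! i, xs ! ((i - 1) div 2)}"
      by (simp add: nth_append)
  qed (rule refl)
  have new: "{?ys ! length xs, ?ys ! ((length xs - 1) div 2)} = {x, xs ! ((length xs - 1) div 2)}"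
    using parent[of "length xs"] assms by (simp add: nth_append)
  have indices: "{i. 0 < i \<and> i < length ?ys} = insert (length xs) ?I"
    using assms by auto
  show ?thesis
    unfolding tree_edges_image indices image_insert old new by (rule refl)
qed

lemma tree_edges_subset: "e \<in> tree_edges xs \<Longrightarrow> e \<subseteq> set xs"
  unfolding tree_edges_def
  by (auto intro!: nth_mem)

lemma parent_mem: "xs \<noteq> [] \<Longrightarrow> xs ! ((length xs - 1) div 2) \<in> set xs"
proof (rule nth_mem)
  assume "xs \<noteq> []"
  then have "length xs - 1 < length xs" by simp
  then show "(length xs - 1) div 2 < length xs" by (rule le_less_trans[OF div_le_dividend])
qed

lemma hd_reaches_tree_edges:
  assumes "distinct xs" "set xs \<subseteq> A" "y \<in> set xs"
  shows "(hd xs, y) \<in> (adj A (tree_edges xs))\<^sup>*"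
  using assms
proof (induction xs arbitrary: y rule: rev_induct)
  case (snoc x xs)
  show ?case
  proof (cases "xs = []")
    case False
    let ?p = "xs ! ((length xs - 1) div 2)"
    have edges: "tree_edges (xs @ [x]) = insert {x, ?p} (tree_edges xs)"
      using False by (rule tree_edges_snoc)
    have mono: "(adj A (tree_edges xs))\<^sup>* \<subseteq> (adj A (tree_edges (xs @ [x])))\<^sup>*"
      unfolding edges by (rule rtrancl_adj_mono) auto
    have reach_xs: "(hd (xs @ [x]), z) \<in> (adj A (tree_edges (xs @ [x])))\<^sup>*" if "z \<in> set xs" for z
      using snoc.IH[of z] snoc.prems that False mono by auto
    show ?thesis
    proof (cases "y \<in> set xs")
      case False
      have "?p \<in> set xs" using \<open>xs \<noteq> []\<close> by (rule parent_mem)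
      moreover have "(?p, x) \<in> adj A (tree_edges (xs @ [x]))"
        using calculation snoc.prems(1,2) unfolding edges by (auto simp: adj_def insert_commute)
      ultimately show ?thesis
        using False snoc.prems(3) reach_xs by (auto intro: rtrancl_into_rtrancl)
    qed (rule reach_xs)
  qed (use snoc.prems in simp)
qed simp

lemma forest_Un_tree_edges:
  assumes "forest A F" "\<forall>e\<in>F. e \<subseteq> A" "distinct xs" "set xs \<subseteq> A"
    and unconnected: "\<forall>x\<in>set xs. \<forall>y\<in>set xs. x \<noteq> y \<longrightarrow> (x, y) \<notin> (adj A F)\<^sup>*"
  shows "forest A (F \<union> tree_edges xs)"
  using assms(3-5)
proof (induction xs rule: rev_induct)
  case Nil
  then show ?case using assms(1) by (simp add: tree_edges_Nil)
next
  case (snoc x xs)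
  show ?case
  proof (cases "xs = []")
    case True
    then show ?thesis using assms(1) by (simp add: tree_edges_def)
  next
    case False
    let ?p = "xs ! ((length xs - 1) div 2)"
    have p: "?p \<in> set xs" using False by (rule parent_mem)
    have "(x, ?p) \<notin> (adj A (F \<union> tree_edges xs))\<^sup>*"
    proof
      assume "(x, ?p) \<in> (adj A (F \<union> tree_edges xs))\<^sup>*"
      then have "(x, ?p) \<in> (adj A F)\<^sup>* \<or> (\<exists>y\<in>set xs. (x, y) \<in> (adj A F)\<^sup>*)"
        using rtrancl_adj_Un_through[of "tree_edges xs" "set xs"] tree_edges_subset by blast
      with p snoc.prems show False by auto
    qed
    moreover have "forest A (F \<union> tree_edges xs)" using snoc by simp
    moreover have "\<forall>e\<in>F \<union> tree_edges xs. e \<subseteq> A"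
      using assms(2) snoc.prems(2) tree_edges_subset by fastforce
    ultimately have "forest A (insert {x, ?p} (F \<union> tree_edges xs))"
      using p snoc.prems by (intro forest_insert_edge) auto
    then show ?thesis using tree_edges_snoc[OF False] by simp
  qed
qed

lemma relabel_component_respects_rtrancl:
  assumes const: "\<forall>x y. (x, y) \<in> (adj A F)\<^sup>* \<longrightarrow> g x = g y"
    and T_sub: "\<forall>e\<in>T. e \<subseteq> S" and "S \<subseteq> A"
    and reach: "\<forall>y\<in>S. (z, y) \<in> (adj A (F \<union> T))\<^sup>*"
    and path: "(x, y) \<in> (adj A (F \<union> T))\<^sup>*"
  shows "(if x \<in> comp A (F \<union> T) z then c else g x) = (if y \<in> comp A (F \<union> T) z then c else g y)"
proof (cases "x \<in> comp A (F \<union> T) z")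
  case False
  have "(x, y) \<in> (adj A F)\<^sup>*"
  proof (rule ccontr)
    assume "(x, y) \<notin> (adj A F)\<^sup>*"
    then obtain t where t: "t \<in> S" "(x, t) \<in> (adj A F)\<^sup>*"
      using rtrancl_adj_Un_through[OF T_sub path] by blast
    have xt: "(x, t) \<in> (adj A (F \<union> T))\<^sup>*"
      using t(2) rtrancl_adj_mono[of A A F "F \<union> T"] by blast
    have "x \<in> A"
      using t(1) \<open>S \<subseteq> A\<close> rtrancl_adj_endpoints[OF xt] by (cases "x = t") auto
    moreover have "(z, x) \<in> (adj A (F \<union> T))\<^sup>*"
      using reach t(1) rtrancl_adj_sym[OF xt] by (blast intro: rtrancl_trans)
    ultimately show False using False by (simp add: comp_def)
  qed
  with False const mem_comp_iff_of_rtrancl_adj[OF path] show ?thesis by simp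
qed (simp add: mem_comp_iff_of_rtrancl_adj[OF path])

lemma sum_transfer_weight:
  assumes "finite A" "v \<in> A" "r \<in> A - {v}"
  shows "sum (w(r := w r + w v)) (A - {v}) = sum w A"
proof -
  have fin: "finite (A - {v})" using assms(1) by simp
  have "sum (w(r := w r + w v)) (A - {v} - {r}) = sum w (A - {v} - {r})"
    by (rule sum.cong) auto
  then have "sum (w(r := w r + w v)) (A - {v}) = w r + w v + sum w (A - {v} - {r})"
    using sum.remove[OF fin assms(3), of "w(r := w r + w v)"] by simp
  also have "\<dots> = w v + sum w (A - {v})"
    using sum.remove[OF fin assms(3), of w] by (simp add: add_ac)
  also have "\<dots> = sum w A"
    using sum.remove[OF assms(1,2), of w] by simp
  finally show ?thesis .
qed

lemma relabel_tree_component_respects_rtrancl: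
  assumes const: "\<forall>x y. (x, y) \<in> (adj A F)\<^sup>* \<longrightarrow> g x = g y"
    and "distinct xs" "set xs \<subseteq> A"
    and path: "(x, y) \<in> (adj A (F \<union> tree_edges xs))\<^sup>*"
  shows "(if xs \<noteq> [] \<and> x \<in> comp A (F \<union> tree_edges xs) (hd xs) then c else g x)
    = (if xs \<noteq> [] \<and> y \<in> comp A (F \<union> tree_edges xs) (hd xs) then c else g y)"
proof (cases "xs = []")
  case True
  with const path show ?thesis by (simp add: tree_edges_Nil)
next
  case False
  have "\<forall>e\<in>tree_edges xs. e \<subseteq> set xs" using tree_edges_subset by blast
  moreover have "\<forall>y\<in>set xs. (hd xs, y) \<in> (adj A (F \<union> tree_edges xs))\<^sup>*"
    using hd_reaches_tree_edges[OF assms(2,3)] rtrancl_adj_mono[of A A "tree_edges xs"] by blast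
  ultimately show ?thesis
    using relabel_component_respects_rtrancl[OF const _ assms(3) _ path] False by simp
qed

lemma sum_after_weight_transfer_le:
  assumes "finite A" "v \<in> A" "N \<subseteq> A - {v}"
    and "N = {} \<and> w' = w \<or> (\<exists>r\<in>N. w' = w(r := w r + w v))"
  shows "sum w' (A - {v}) \<le> (sum w A :: nat)"
  using assms(4)
proof
  assume "N = {} \<and> w' = w"
  then show ?thesis using assms(1) by (auto intro: sum_mono2)
next
  assume "\<exists>r\<in>N. w' = w(r := w r + w v)"
  then obtain r where r: "r \<in> A - {v}" and w': "w' = w(r := w r + w v)" using assms(3) by blast
  show ?thesis unfolding w' using sum_transfer_weight[OF assms(1,2) r] by (rule eq_imp_le)
qed

definition dash_inv :: "nat \<Rightarrow> 'a dstate \<Rightarrow> bool" where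
  "dash_inv n s \<longleftrightarrow> finite (alive s) \<and>
     (\<forall>e\<in>edges s. e \<subseteq> alive s) \<and> (\<forall>e\<in>hedges s. e \<subseteq> alive s) \<and>
     forest (alive s) (hedges s) \<and>
     (\<forall>x y. (x, y) \<in> (adj (alive s) (hedges s))\<^sup>* \<longrightarrow> ident s x = ident s y) \<and>
     sum (wt s) (alive s) \<le> n"

lemma dash_inv_init:
  assumes "finite V0" "card V0 = n" "graph V0 E0"
  shows "dash_inv n (dash_init V0 E0 id0)"
  using assms by (simp add: dash_inv_def dash_init_def graph_def adj_def forest_empty)

lemma heal_set_pairwise_unconnected:
  assumes inv: "dash_inv n s" and "v \<in> alive s" and UN: "is_UN id0 s v U"
    and x: "x \<in> U \<union> nbrs (hedges s) v" and y: "y \<in> U \<union> nbrs (hedges s) v" and "x \<noteq> y"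
  shows "(x, y) \<notin> (adj (alive s - {v}) (hedges s))\<^sup>*"
proof
  assume path: "(x, y) \<in> (adj (alive s - {v}) (hedges s))\<^sup>*"
  have hedges_sub: "\<forall>e\<in>hedges s. e \<subseteq> alive s" and forest: "forest (alive s) (hedges s)"
    and const: "\<And>a b. (a, b) \<in> (adj (alive s) (hedges s))\<^sup>* \<Longrightarrow> ident s a = ident s b"
    using inv by (auto simp: dash_inv_def)
  have "ident s x = ident s y"
    using path rtrancl_adj_mono[of "alive s - {v}" "alive s"] const by blast
  moreover have "ident s w = ident s v" if "w \<in> nbrs (hedges s) v" for w
    using that hedges_sub \<open>v \<in> alive s\<close>
    by (intro const r_into_rtrancl) (auto simp: nbrs_def adj_def insert_commute)
  moreover have "U \<subseteq> {c \<in> nbrs (edges s) v. ident s c \<noteq> ident s v}"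
    and unique: "\<And>c. c \<in> U \<Longrightarrow> \<exists>!u. u \<in> U \<and> ident s u = ident s c"
    using UN unfolding is_UN_def Let_def by blast+
  ultimately consider "x \<in> U" "y \<in> U" | "x \<in> nbrs (hedges s) v" "y \<in> nbrs (hedges s) v"
    using x y by auto
  then show False
  proof cases
    case 1
    with unique[of x] \<open>ident s x = ident s y\<close> \<open>x \<noteq> y\<close> show False by metis
  next
    case 2
    with forest_nbrs_unconnected[OF forest hedges_sub] path \<open>x \<noteq> y\<close> show False by blast
  qed
qed

lemma dash_step_inv:
  assumes inv: "dash_inv n s" and step: "dash_step E0 id0 s s'"
  shows "dash_inv n s'"
proof -
  obtain v U xs where v: "v \<in> alive s" and UN: "is_UN id0 s v U" and "distinct xs"
    and xs: "set xs = U \<union> nbrs (hedges s) v" and alive': "alive s' = alive s - {v}"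
    and edges': "edges s' = {e \<in> edges s. v \<notin> e} \<union> tree_edges xs"
    and hedges': "hedges s' = {e \<in> hedges s. v \<notin> e} \<union> tree_edges xs"
    and ident': "ident s' = (\<lambda>x. if xs \<noteq> [] \<and> x \<in> comp (alive s') (hedges s') (hd xs)
                        then Min (ident s ` set xs) else ident s x)"
    and wt': "nbrs (hedges s) v = {} \<and> wt s' = wt s \<or>
        (\<exists>r \<in> nbrs (hedges s) v. wt s' = (wt s)(r := wt s r + wt s v))"
    using step unfolding dash_step_def by (elim exE conjE) (rule that; assumption)
  define A' where "A' = alive s - {v}"
  define H0 where "H0 = {e \<in> hedges s. v \<notin> e}"
  have fin: "finite (alive s)" and edges_sub: "\<forall>e\<in>edges s. e \<subseteq> alive s"
    and hedges_sub: "\<forall>e\<in>hedges s. e \<subseteq> alive s" and forest: "forest (alive s) (hedges s)"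
    and const: "\<forall>x y. (x, y) \<in> (adj (alive s) (hedges s))\<^sup>* \<longrightarrow> ident s x = ident s y"
    and weight: "sum (wt s) (alive s) \<le> n"
    using inv by (auto simp: dash_inv_def)
  have H0_sub: "\<forall>e\<in>H0. e \<subseteq> A'" using hedges_sub by (auto simp: H0_def A'_def)
  have H0_le: "(adj A' H0)\<^sup>* \<subseteq> (adj (alive s - {v}) (hedges s))\<^sup>*"
    by (rule rtrancl_adj_mono) (auto simp: A'_def H0_def)
  have "U \<subseteq> nbrs (edges s) v" using UN by (auto simp: is_UN_def Let_def)
  then have xs_sub: "set xs \<subseteq> A'"
    using xs nbrs_subset[OF edges_sub] nbrs_subset[OF hedges_sub] by (auto simp: A'_def)
  have "\<forall>x\<in>set xs. \<forall>y\<in>set xs. x \<noteq> y \<longrightarrow> (x, y) \<notin> (adj A' H0)\<^sup>*"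
    using heal_set_pairwise_unconnected[OF inv v UN] xs H0_le by blast
  then have forest': "forest A' (H0 \<union> tree_edges xs)"
    using forest_Un_tree_edges[OF forest_mono[OF forest] H0_sub \<open>distinct xs\<close> xs_sub]
    by (auto simp: A'_def H0_def)
  have tree_sub: "\<forall>e\<in>tree_edges xs. e \<subseteq> A'" using tree_edges_subset xs_sub by blast
  have const0: "\<forall>x y. (x, y) \<in> (adj A' H0)\<^sup>* \<longrightarrow> ident s x = ident s y"
    using const rtrancl_adj_mono[of A' "alive s" H0 "hedges s"] by (auto simp: A'_def H0_def)
  have const': "ident s' x = ident s' y"
    if "(x, y) \<in> (adj A' (H0 \<union> tree_edges xs))\<^sup>*" for x y
    unfolding ident' alive' hedges' A'_def[symmetric] H0_def[symmetric]
    by (rule relabel_tree_component_respects_rtrancl[OF const0 \<open>distinct xs\<close> xs_sub that])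
  have "sum (wt s') A' \<le> sum (wt s) (alive s)"
    unfolding A'_def using sum_after_weight_transfer_le[OF fin v nbrs_subset[OF hedges_sub] wt'] .
  with weight have weight': "sum (wt s') A' \<le> n" by simp
  show ?thesis
    unfolding dash_inv_def alive' edges' hedges' A'_def[symmetric] H0_def[symmetric]
    using fin forest' const' weight' edges_sub H0_sub tree_sub by (auto simp: A'_def)
qed

lemma dash_reachable_inv:
  assumes "finite V0" "card V0 = n" "connected_graph V0 E0" "dash_reachable V0 E0 id0 s"
  shows "dash_inv n s"
  using assms(4) unfolding dash_reachable_def
proof (induction rule: rtranclp_induct)
  case base
  show ?case using assms(1-3) by (simp add: connected_graph_def dash_inv_init)
next
  case (step s s')
  from step.IH step.hyps(2) show ?case by (rule dash_step_inv)
qed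

lemma rem_le_total_weight:
  assumes fin: "finite (alive s)" and hedges_sub: "\<forall>e\<in>hedges s. e \<subseteq> alive s"
    and forest: "forest (alive s) (hedges s)" and v: "v \<in> alive s"
  shows "rem s v \<le> sum (wt s) (alive s)"
proof -
  let ?N = "nbrs (hedges s) v" and ?T = "\<lambda>u. comp (alive s - {v}) (hedges s) u"
  have "finite ?N" using nbrs_subset[OF hedges_sub] fin by (meson finite_Diff finite_subset)
  moreover have "\<forall>u\<in>?N. finite (?T u)" using fin by (simp add: comp_def)
  moreover have "\<forall>u1\<in>?N. \<forall>u2\<in>?N. u1 \<noteq> u2 \<longrightarrow> ?T u1 \<inter> ?T u2 = {}"
    using comp_nbrs_disjoint[OF forest hedges_sub] by blast
  ultimately have "(\<Sum>u\<in>?N. WT s u v) = sum (wt s) (\<Union>u\<in>?N. ?T u)"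
    unfolding WT_def by (rule sum.UNION_disjoint[symmetric])
  also have "\<dots> \<le> sum (wt s) (alive s - {v})"
    using fin by (intro sum_mono2) (auto simp: comp_def)
  finally have "rem s v \<le> sum (wt s) (alive s - {v}) + wt s v"
    unfolding rem_def by linarith
  also have "\<dots> = sum (wt s) (alive s)"
    using sum.remove[OF fin v, of "wt s"] by simp
  finally show ?thesis .
qed

theorem lemma5:
  fixes V0 :: "'a set" and E0 :: "'a set set" and id0 :: "'a \<Rightarrow> real"
    and n :: nat and s :: "'a dstate" and v :: 'a
  assumes "finite V0" and "card V0 = n"
    and "connected_graph V0 E0"
    and "\<forall>x \<in> V0. 0 \<le> id0 x \<and> id0 x \<le> 1"
    and "dash_reachable V0 E0 id0 s"
    and "v \<in> alive s"
  shows "rem s v \<le> n"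
proof -
  have "dash_inv n s" using dash_reachable_inv[OF assms(1-3,5)] .
  then have "rem s v \<le> sum (wt s) (alive s)" and "sum (wt s) (alive s) \<le> n"
    using rem_le_total_weight[OF _ _ _ assms(6)] by (auto simp: dash_inv_def)
  then show ?thesis by linarith
qed

end
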